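(* Let $\mathcal{S}\subset(\mathbb{N}\cup\{\infty\})^6$ be the set of the following 13 vectors: $B=(\infty,\infty,\infty,\infty,\infty,\infty)$, $2S=(\infty,\infty,\infty,\infty,\infty,1)$, $RS=(\infty,\infty,\infty,\infty,1,1)$, $PF=(\infty,2,\infty,\infty,\infty,1)$, $S=(\infty,\infty,\infty,\infty,0,0)$, $RT=(\infty,\infty,\infty,1,1,1)$, $FT=(\infty,\infty,\infty,0,1,1)$, $R=(\infty,2,1,1,1,1)$, $RV=(\infty,2,1,0,1,1)$, $IF=(\infty,2,0,0,\infty,1)$, $F=(\infty,2,0,0,1,1)$, $T=(\infty,1,0,0,0,0)$, $E=(1,1,0,0,0,0)$. Then $\mathcal{S}$ is not a sublattice of $(\mathbb{N}\cup\{\infty\})^6$ under componentwise $\min/\max$, and the sublattice $L_{30}$ it generates has exactly $30$ elements (so the closure adds $17$ elements not in $\mathcal{S}$); moreover, iterating the operation of adjoining all pairwise componentwise meets and joins stabilizes after three rounds.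
   Context: $(\mathbb{N}\cup\{\infty\})^6$ is ordered componentwise with $\infty$ above every natural number; meet and join are componentwise $\min$ and $\max$. These 13 vectors are Bisping's energy vectors of the named equivalences (bisimulation, 2-nested simulation, ready simulation, possible futures, simulation, ready traces, failure traces, readiness, revivals, impossible futures, failures, traces, enabledness). *)

theory Defs
  imports Main "HOL-Library.Extended_Nat"
begin

text \<open>Vectors of (N \<union> {\<infinity>})^6 are represented as enat lists of length 6;
  meet/join are componentwise min/max.\<close>

definition vmeet :: "enat list \<Rightarrow> enat list \<Rightarrow> enat list" where
  "vmeet xs ys = map2 min xs ys"

definition vjoin :: "enat list \<Rightarrow> enat list \<Rightarrow> enat list" where
  "vjoin xs ys = map2 max xs ys"

definition closed_lat :: "enat list set \<Rightarrow> bool" where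
  "closed_lat X \<longleftrightarrow> (\<forall>a\<in>X. \<forall>b\<in>X. vmeet a b \<in> X \<and> vjoin a b \<in> X)"

inductive_set gen_lat :: "enat list set \<Rightarrow> enat list set" for X where
  base: "a \<in> X \<Longrightarrow> a \<in> gen_lat X"
| meet: "a \<in> gen_lat X \<Longrightarrow> b \<in> gen_lat X \<Longrightarrow> vmeet a b \<in> gen_lat X"
| join: "a \<in> gen_lat X \<Longrightarrow> b \<in> gen_lat X \<Longrightarrow> vjoin a b \<in> gen_lat X"

definition lat_step :: "enat list set \<Rightarrow> enat list set" where
  "lat_step X = X \<union> {vmeet a b | a b. a \<in> X \<and> b \<in> X} \<union> {vjoin a b | a b. a \<in> X \<and> b \<in> X}"

definition B_v :: "enat list" where "B_v = [\<infinity>,\<infinity>,\<infinity>,\<infinity>,\<infinity>,\<infinity>]"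
definition S2_v :: "enat list" where "S2_v = [\<infinity>,\<infinity>,\<infinity>,\<infinity>,\<infinity>,1]"
definition RS_v :: "enat list" where "RS_v = [\<infinity>,\<infinity>,\<infinity>,\<infinity>,1,1]"
definition PF_v :: "enat list" where "PF_v = [\<infinity>,2,\<infinity>,\<infinity>,\<infinity>,1]"
definition S_v :: "enat list" where "S_v = [\<infinity>,\<infinity>,\<infinity>,\<infinity>,0,0]"
definition RT_v :: "enat list" where "RT_v = [\<infinity>,\<infinity>,\<infinity>,1,1,1]"
definition FT_v :: "enat list" where "FT_v = [\<infinity>,\<infinity>,\<infinity>,0,1,1]"
definition R_v :: "enat list" where "R_v = [\<infinity>,2,1,1,1,1]"
definition RV_v :: "enat list" where "RV_v = [\<infinity>,2,1,0,1,1]"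
definition IF_v :: "enat list" where "IF_v = [\<infinity>,2,0,0,\<infinity>,1]"
definition F_v :: "enat list" where "F_v = [\<infinity>,2,0,0,1,1]"
definition T_v :: "enat list" where "T_v = [\<infinity>,1,0,0,0,0]"
definition E_v :: "enat list" where "E_v = [1,1,0,0,0,0]"

definition Spectrum :: "enat list set" where
  "Spectrum = {B_v, S2_v, RS_v, PF_v, S_v, RT_v, FT_v, R_v, RV_v, IF_v, F_v, T_v, E_v}"

end

theory Submission
  imports Defs
begin

text \<open>The rounds \<open>lat_step\<^sup>k X\<close> increase and stay inside \<open>gen_lat X\<close>. As soon as one round is a
  fixed point of \<open>lat_step\<close> it is closed under meet and join, so it contains \<open>gen_lat X\<close> and
  all later rounds coincide with it. For the 13 spectrum vectors the first three rounds are
  computed by evaluation: the second round is the 30-element lattice and the third adds nothing.\<close>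

lemma lat_step_set:
  "lat_step (set xs) = set (xs @ [vmeet a b. a \<leftarrow> xs, b \<leftarrow> xs] @ [vjoin a b. a \<leftarrow> xs, b \<leftarrow> xs])"
  unfolding lat_step_def by auto

lemma subset_lat_step: "X \<subseteq> lat_step X"
  unfolding lat_step_def by blast

lemma subset_funpow_lat_step: "X \<subseteq> (lat_step ^^ k) X"
  by (induction k) (use subset_lat_step in auto)

lemma closed_lat_iff_lat_step_eq: "closed_lat X \<longleftrightarrow> lat_step X = X"
  unfolding closed_lat_def lat_step_def by blast

lemma lat_step_subset_gen_lat: "X \<subseteq> gen_lat Y \<Longrightarrow> lat_step X \<subseteq> gen_lat Y"
  unfolding lat_step_def by (auto intro: gen_lat.meet gen_lat.join)

lemma funpow_lat_step_subset_gen_lat: "(lat_step ^^ k) X \<subseteq> gen_lat X"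
  by (induction k) (auto intro: gen_lat.base simp: lat_step_subset_gen_lat)

lemma gen_lat_least:
  assumes "X \<subseteq> Y" and "closed_lat Y"
  shows "gen_lat X \<subseteq> Y"
proof
  fix a assume "a \<in> gen_lat X"
  then show "a \<in> Y"
    by induction (use assms in \<open>auto simp: closed_lat_def\<close>)
qed

lemma funpow_lat_step_stable:
  assumes "lat_step ((lat_step ^^ n) X) = (lat_step ^^ n) X" and "n \<le> k"
  shows "(lat_step ^^ k) X = (lat_step ^^ n) X"
  using assms(2) by (induction k rule: dec_induct) (simp_all add: assms(1))

lemma gen_lat_eq_funpow_lat_step:
  assumes "lat_step ((lat_step ^^ n) X) = (lat_step ^^ n) X"
  shows "gen_lat X = (lat_step ^^ n) X"
proof
  show "gen_lat X \<subseteq> (lat_step ^^ n) X"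
    using assms by (intro gen_lat_least subset_funpow_lat_step) (simp add: closed_lat_iff_lat_step_eq)
  show "(lat_step ^^ n) X \<subseteq> gen_lat X"
    by (rule funpow_lat_step_subset_gen_lat)
qed

definition Spectrum_step1 :: "enat list set" where
  "Spectrum_step1 = set [[1,1,0,0,0,0], [\<infinity>,1,0,0,0,0], [\<infinity>,2,0,0,0,0], [\<infinity>,2,0,0,1,1],
    [\<infinity>,2,0,0,\<infinity>,1], [\<infinity>,2,1,0,0,0], [\<infinity>,2,1,0,1,1], [\<infinity>,2,1,0,\<infinity>,1], [\<infinity>,2,1,1,0,0],
    [\<infinity>,2,1,1,1,1], [\<infinity>,2,1,1,\<infinity>,1], [\<infinity>,2,\<infinity>,0,1,1], [\<infinity>,2,\<infinity>,1,1,1], [\<infinity>,2,\<infinity>,\<infinity>,0,0],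
    [\<infinity>,2,\<infinity>,\<infinity>,1,1], [\<infinity>,2,\<infinity>,\<infinity>,\<infinity>,1], [\<infinity>,\<infinity>,\<infinity>,0,0,0], [\<infinity>,\<infinity>,\<infinity>,0,1,1],
    [\<infinity>,\<infinity>,\<infinity>,0,\<infinity>,1], [\<infinity>,\<infinity>,\<infinity>,1,0,0], [\<infinity>,\<infinity>,\<infinity>,1,1,1], [\<infinity>,\<infinity>,\<infinity>,1,\<infinity>,1],
    [\<infinity>,\<infinity>,\<infinity>,\<infinity>,0,0], [\<infinity>,\<infinity>,\<infinity>,\<infinity>,1,1], [\<infinity>,\<infinity>,\<infinity>,\<infinity>,\<infinity>,1], [\<infinity>,\<infinity>,\<infinity>,\<infinity>,\<infinity>,\<infinity>]]"

definition L30 :: "enat list set" where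
  "L30 = set [[1,1,0,0,0,0], [\<infinity>,1,0,0,0,0], [\<infinity>,2,0,0,0,0], [\<infinity>,2,0,0,1,1], [\<infinity>,2,0,0,\<infinity>,1],
    [\<infinity>,2,1,0,0,0], [\<infinity>,2,1,0,1,1], [\<infinity>,2,1,0,\<infinity>,1], [\<infinity>,2,1,1,0,0], [\<infinity>,2,1,1,1,1],
    [\<infinity>,2,1,1,\<infinity>,1], [\<infinity>,2,\<infinity>,0,0,0], [\<infinity>,2,\<infinity>,0,1,1], [\<infinity>,2,\<infinity>,0,\<infinity>,1], [\<infinity>,2,\<infinity>,1,0,0],
    [\<infinity>,2,\<infinity>,1,1,1], [\<infinity>,2,\<infinity>,1,\<infinity>,1], [\<infinity>,2,\<infinity>,\<infinity>,0,0], [\<infinity>,2,\<infinity>,\<infinity>,1,1],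
    [\<infinity>,2,\<infinity>,\<infinity>,\<infinity>,1], [\<infinity>,\<infinity>,\<infinity>,0,0,0], [\<infinity>,\<infinity>,\<infinity>,0,1,1], [\<infinity>,\<infinity>,\<infinity>,0,\<infinity>,1],
    [\<infinity>,\<infinity>,\<infinity>,1,0,0], [\<infinity>,\<infinity>,\<infinity>,1,1,1], [\<infinity>,\<infinity>,\<infinity>,1,\<infinity>,1], [\<infinity>,\<infinity>,\<infinity>,\<infinity>,0,0],
    [\<infinity>,\<infinity>,\<infinity>,\<infinity>,1,1], [\<infinity>,\<infinity>,\<infinity>,\<infinity>,\<infinity>,1], [\<infinity>,\<infinity>,\<infinity>,\<infinity>,\<infinity>,\<infinity>]]"

lemma Spectrum_eq_set:
  "Spectrum = set [B_v, S2_v, RS_v, PF_v, S_v, RT_v, FT_v, R_v, RV_v, IF_v, F_v, T_v, E_v]"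
  by (simp add: Spectrum_def)

lemma lat_step_Spectrum: "lat_step Spectrum = Spectrum_step1"
  unfolding Spectrum_eq_set lat_step_set Spectrum_step1_def by code_simp

lemma lat_step_Spectrum_step1: "lat_step Spectrum_step1 = L30"
  unfolding Spectrum_step1_def lat_step_set L30_def by code_simp

lemma lat_step_L30: "lat_step L30 = L30"
  unfolding L30_def lat_step_set by code_simp

lemma Spectrum_step1_neq_Spectrum: "Spectrum_step1 \<noteq> Spectrum"
  unfolding Spectrum_step1_def Spectrum_eq_set by code_simp

lemma L30_neq_Spectrum_step1: "L30 \<noteq> Spectrum_step1"
  unfolding L30_def Spectrum_step1_def by code_simp

lemma card_Spectrum: "card Spectrum = 13"
  unfolding Spectrum_eq_set by code_simp

lemma card_L30: "card L30 = 30"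
  unfolding L30_def by code_simp

theorem mainTheorem10:
  shows "\<not> closed_lat Spectrum
    \<and> card (gen_lat Spectrum) = 30
    \<and> card (gen_lat Spectrum - Spectrum) = 17
    \<and> (lat_step ^^ 1) Spectrum \<noteq> Spectrum
    \<and> (lat_step ^^ 2) Spectrum \<noteq> (lat_step ^^ 1) Spectrum
    \<and> (lat_step ^^ 3) Spectrum = (lat_step ^^ 2) Spectrum
    \<and> (\<forall>k\<ge>2. (lat_step ^^ k) Spectrum = gen_lat Spectrum)"
proof -
  have step1: "(lat_step ^^ 1) Spectrum = Spectrum_step1"
    by (simp add: lat_step_Spectrum)
  have step2: "(lat_step ^^ 2) Spectrum = L30"
    by (simp add: numeral_2_eq_2 lat_step_Spectrum lat_step_Spectrum_step1)
  have stable: "lat_step ((lat_step ^^ 2) Spectrum) = (lat_step ^^ 2) Spectrum"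
    by (simp add: step2 lat_step_L30)
  have gen: "gen_lat Spectrum = L30"
    using gen_lat_eq_funpow_lat_step [OF stable] by (simp add: step2)
  have "Spectrum \<subseteq> L30"
    using subset_funpow_lat_step [of Spectrum 2] by (simp add: step2)
  moreover have "finite Spectrum"
    by (simp add: Spectrum_def)
  ultimately have "card (L30 - Spectrum) = 17"
    by (simp add: card_Diff_subset card_L30 card_Spectrum)
  moreover have "\<forall>k\<ge>2. (lat_step ^^ k) Spectrum = L30"
    using funpow_lat_step_stable [OF stable] by (simp add: step2)
  ultimately show ?thesis
    using Spectrum_step1_neq_Spectrum L30_neq_Spectrum_step1 card_L30
    by (simp add: gen step1 step2 closed_lat_iff_lat_step_eq lat_step_Spectrum)
qed

end
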